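(* Let $G=(U,V,E)$ be a bipartite graph and let $X \subseteq V$ be such that some minimum-cardinality vertex cover of $G$ contains $X$. Let $Y \subseteq V$. Then $G \setminus Y$ has a minimum-cardinality vertex cover containing $X \setminus Y$.
   Context: $G=(U,V,E)$ denotes a bipartite graph with vertex set $U\cup V$ and every edge having one end in $U$ and the other in $V$. $G\setminus Y$ denotes the graph obtained by deleting the vertices of $Y$. A vertex cover is a set of vertices incident to all edges. *)

theory Defs
  imports Main
begin

definition bipartite_graph :: "'a set \<Rightarrow> 'a set \<Rightarrow> ('a \<times> 'a) set \<Rightarrow> bool" where
  "bipartite_graph U V E \<longleftrightarrow> finite U \<and> finite V \<and> U \<inter> V = {} \<and> E \<subseteq> U \<times> V"

definition vertex_cover :: "'a set \<Rightarrow> 'a set \<Rightarrow> ('a \<times> 'a) set \<Rightarrow> 'a set \<Rightarrow> bool" where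
  "vertex_cover U V E C \<longleftrightarrow> C \<subseteq> U \<union> V \<and> (\<forall>(u,v)\<in>E. u \<in> C \<or> v \<in> C)"

definition min_vertex_cover :: "'a set \<Rightarrow> 'a set \<Rightarrow> ('a \<times> 'a) set \<Rightarrow> 'a set \<Rightarrow> bool" where
  "min_vertex_cover U V E C \<longleftrightarrow> vertex_cover U V E C \<and>
     (\<forall>C'. vertex_cover U V E C' \<longrightarrow> card C \<le> card C')"

text \<open>The edge set of G minus the vertices in Y (vertex sets become U - Y, V - Y).\<close>
definition del_edges :: "('a \<times> 'a) set \<Rightarrow> 'a set \<Rightarrow> ('a \<times> 'a) set" where
  "del_edges E Y = {(u,v) \<in> E. u \<notin> Y \<and> v \<notin> Y}"

end

theory Submission
  imports Defs
begin

text \<open>Let \<open>C\<close> be a minimum cover of \<open>G\<close> containing \<open>X\<close> and \<open>C'\<close> a minimum cover of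
  \<open>G \<setminus> Y\<close>. Exchange their parts: \<open>D\<close> takes the \<open>U\<close>-vertices lying in both and the
  \<open>V\<close>-vertices lying in either (outside \<open>Y\<close>), \<open>F\<close> takes the rest. Then \<open>D\<close> covers
  \<open>G \<setminus> Y\<close>, \<open>F\<close> covers \<open>G\<close>, and \<open>D \<union> F = C \<union> C'\<close>, \<open>D \<inter> F = C \<inter> C'\<close>, so
  \<open>|D| + |F| = |C| + |C'|\<close>. Minimality of \<open>C\<close> gives \<open>|C| \<le> |F|\<close>, hence \<open>|D| \<le> |C'|\<close>,
  and \<open>D\<close> is a minimum cover of \<open>G \<setminus> Y\<close> containing \<open>X - Y\<close>.\<close>

lemma card_add_eq_if_Un_Int_eq:
  assumes "finite A" "finite B" "D \<union> F = A \<union> B" "D \<inter> F = A \<inter> B"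
  shows "card D + card F = card A + card B"
proof -
  have "finite D" "finite F" using assms(1-3) by (metis finite_Un)+
  then show ?thesis using card_Un_Int assms by metis
qed

lemma min_vertex_cover_exists:
  assumes "vertex_cover U V E C"
  shows "\<exists>C. min_vertex_cover U V E C"
  using ex_has_least_nat[of "vertex_cover U V E" C card] assms
  unfolding min_vertex_cover_def by blast

lemma vertex_cover_del_edges_exchange:
  assumes "E \<subseteq> U \<times> V"
    and "vertex_cover U V E C"
    and "vertex_cover (U - Y) (V - Y) (del_edges E Y) C'"
  shows "vertex_cover (U - Y) (V - Y) (del_edges E Y) (C \<inter> C' \<inter> U \<union> ((C \<union> C') \<inter> V - Y))"
  using assms unfolding vertex_cover_def del_edges_def by blast

lemma vertex_cover_exchange:
  assumes "E \<subseteq> U \<times> V" "U \<inter> Y = {}"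
    and "vertex_cover U V E C"
    and "vertex_cover (U - Y) (V - Y) (del_edges E Y) C'"
  shows "vertex_cover U V E ((C \<union> C') \<inter> U \<union> C \<inter> C' \<inter> V \<union> C \<inter> Y)"
  unfolding vertex_cover_def
proof (intro conjI ballI)
  show "(C \<union> C') \<inter> U \<union> C \<inter> C' \<inter> V \<union> C \<inter> Y \<subseteq> U \<union> V"
    using assms(3) unfolding vertex_cover_def by blast
next
  fix e assume "e \<in> E"
  then obtain u v where e: "e = (u, v)" "(u, v) \<in> E" "u \<in> U" "v \<in> V"
    using assms(1) by blast
  have "u \<in> C \<or> v \<in> C" using assms(3) e unfolding vertex_cover_def by blast
  moreover have "v \<notin> Y \<Longrightarrow> u \<in> C' \<or> v \<in> C'"
    using assms(2,4) e unfolding vertex_cover_def del_edges_def by blast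
  ultimately show "case e of (u, v) \<Rightarrow>
      u \<in> (C \<union> C') \<inter> U \<union> C \<inter> C' \<inter> V \<union> C \<inter> Y \<or> v \<in> (C \<union> C') \<inter> U \<union> C \<inter> C' \<inter> V \<union> C \<inter> Y"
    using e by auto
qed

lemma min_vertex_cover_del_edges_exchange:
  assumes "bipartite_graph U V E" "Y \<subseteq> V"
    and C: "min_vertex_cover U V E C"
    and C': "min_vertex_cover (U - Y) (V - Y) (del_edges E Y) C'"
  shows "min_vertex_cover (U - Y) (V - Y) (del_edges E Y) (C \<inter> C' \<inter> U \<union> ((C \<union> C') \<inter> V - Y))"
    (is "min_vertex_cover _ _ _ ?D")
proof -
  let ?F = "(C \<union> C') \<inter> U \<union> C \<inter> C' \<inter> V \<union> C \<inter> Y"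
  have G: "finite U" "finite V" "U \<inter> V = {}" "E \<subseteq> U \<times> V"
    using assms(1) unfolding bipartite_graph_def by auto
  have cov: "vertex_cover U V E C" "vertex_cover (U - Y) (V - Y) (del_edges E Y) C'"
    using C C' unfolding min_vertex_cover_def by auto
  then have sub: "C \<subseteq> U \<union> V" "C' \<subseteq> U \<union> V - Y"
    unfolding vertex_cover_def by auto
  then have "finite C" "finite C'"
    using G(1,2) finite_subset by blast+
  moreover have "?D \<union> ?F = C \<union> C'" "?D \<inter> ?F = C \<inter> C'"
    using sub G(3) by blast+
  ultimately have "card ?D + card ?F = card C + card C'"
    by (rule card_add_eq_if_Un_Int_eq)
  moreover have "card C \<le> card ?F"
    using C vertex_cover_exchange[OF G(4) _ cov] G(3) assms(2)
    unfolding min_vertex_cover_def by blast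
  ultimately have "card ?D \<le> card C'" by linarith
  then show ?thesis
    using C' vertex_cover_del_edges_exchange[OF G(4) cov]
    unfolding min_vertex_cover_def by fastforce
qed

theorem lemma5:
  fixes U V X Y :: "'a set" and E :: "('a \<times> 'a) set"
  assumes "bipartite_graph U V E"
    and "X \<subseteq> V"
    and "\<exists>C. min_vertex_cover U V E C \<and> X \<subseteq> C"
    and "Y \<subseteq> V"
  shows "\<exists>C. min_vertex_cover (U - Y) (V - Y) (del_edges E Y) C \<and> X - Y \<subseteq> C"
proof -
  obtain C where C: "min_vertex_cover U V E C" "X \<subseteq> C" using assms(3) by blast
  have "vertex_cover (U - Y) (V - Y) (del_edges E Y) (U \<union> V - Y)"
    using assms(1) unfolding bipartite_graph_def vertex_cover_def del_edges_def by auto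
  then obtain C' where "min_vertex_cover (U - Y) (V - Y) (del_edges E Y) C'"
    using min_vertex_cover_exists by blast
  then have "min_vertex_cover (U - Y) (V - Y) (del_edges E Y) (C \<inter> C' \<inter> U \<union> ((C \<union> C') \<inter> V - Y))"
    using min_vertex_cover_del_edges_exchange assms(1,4) C(1) by blast
  moreover have "X - Y \<subseteq> C \<inter> C' \<inter> U \<union> ((C \<union> C') \<inter> V - Y)" using C(2) assms(2) by blast
  ultimately show ?thesis by blast
qed

end
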